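(* Let $F:\mathcal C\to\mathcal D$ be a left multiadjoint and let $\mathcal M$ be a left-cancellable composable class of morphisms in $\mathcal D$. If $\perp$ is an independence relation on $\mathcal D_{\mathcal M}$ satisfying uniqueness, then the independence relation $F^{-1}(\perp)$ on $\mathcal C_{F^{-1}(\mathcal M)}$ satisfies uniqueness, where $F^{-1}(\mathcal M)$ is the class of morphisms $f$ of $\mathcal C$ with $F(f)\in\mathcal M$.
   Context: A class $\mathcal M$ of morphisms is composable if closed under composition and containing all isomorphisms, and left-cancellable if $gf\in\mathcal M$ implies $f\in\mathcal M$. $\mathcal D_{\mathcal M}$ is the subcategory with all objects and morphisms in $\mathcal M$. A functor $F$ is a left multiadjoint if for every object $D$ of $\mathcal D$ there is a family $\{e_k:F(C_k)\to D\}_{k\in K}$ such that every $e:F(C)\to D$ factors as $e=e_kF(f)$ for a unique $k$ and unique $f:C\to C_k$. A commuting square consists of $C\to A$, $C\to B$, $A\to M$, $B\to M$ with equal composites $C\to M$; base span $A\leftarrow C\to B$. An independence relation is a class of commuting squares (called independent); $F^{-1}(\perp)$ consists of the commuting squares whose image under $F$ is in $\perp$. Uniqueness: any two independent squares with the same base span $A\leftarrow C\to B$ and tops $M,M'$ can be amalgamated, i.e. there are $N$ and $M\to N$, $M'\to N$ such that the two composites $A\to N$ agree and the two composites $B\to N$ agree. *)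

theory Defs
  imports Main
begin

text \<open>Categories represented explicitly: objects, arrows, domain, codomain,
identities and composition (Comp g f = g after f).\<close>

record ('o, 'm) cat =
  Obj  :: "'o set"
  Arr  :: "'m set"
  Dom  :: "'m \<Rightarrow> 'o"
  Cod  :: "'m \<Rightarrow> 'o"
  Idt  :: "'o \<Rightarrow> 'm"
  Comp :: "'m \<Rightarrow> 'm \<Rightarrow> 'm"

definition hom :: "('o, 'm) cat \<Rightarrow> 'o \<Rightarrow> 'o \<Rightarrow> 'm set" where
  "hom C x y = {f \<in> Arr C. Dom C f = x \<and> Cod C f = y}"

definition is_category :: "('o, 'm) cat \<Rightarrow> bool" where
  "is_category C \<longleftrightarrow>
     (\<forall>f \<in> Arr C. Dom C f \<in> Obj C \<and> Cod C f \<in> Obj C) \<and>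
     (\<forall>x \<in> Obj C. Idt C x \<in> hom C x x) \<and>
     (\<forall>f \<in> Arr C. \<forall>g \<in> Arr C. Cod C f = Dom C g \<longrightarrow>
        Comp C g f \<in> hom C (Dom C f) (Cod C g)) \<and>
     (\<forall>f \<in> Arr C. Comp C f (Idt C (Dom C f)) = f \<and> Comp C (Idt C (Cod C f)) f = f) \<and>
     (\<forall>f \<in> Arr C. \<forall>g \<in> Arr C. \<forall>h \<in> Arr C.
        Cod C f = Dom C g \<longrightarrow> Cod C g = Dom C h \<longrightarrow>
        Comp C h (Comp C g f) = Comp C (Comp C h g) f)"

definition is_functor ::
  "('a, 'b) cat \<Rightarrow> ('c, 'd) cat \<Rightarrow> ('a \<Rightarrow> 'c) \<Rightarrow> ('b \<Rightarrow> 'd) \<Rightarrow> bool" where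
  "is_functor C D Fo Fm \<longleftrightarrow>
     (\<forall>x \<in> Obj C. Fo x \<in> Obj D) \<and>
     (\<forall>f \<in> Arr C. Fm f \<in> hom D (Fo (Dom C f)) (Fo (Cod C f))) \<and>
     (\<forall>x \<in> Obj C. Fm (Idt C x) = Idt D (Fo x)) \<and>
     (\<forall>f \<in> Arr C. \<forall>g \<in> Arr C. Cod C f = Dom C g \<longrightarrow>
        Fm (Comp C g f) = Comp D (Fm g) (Fm f))"

definition is_iso :: "('o, 'm) cat \<Rightarrow> 'm \<Rightarrow> bool" where
  "is_iso C f \<longleftrightarrow> f \<in> Arr C \<and>
     (\<exists>g \<in> hom C (Cod C f) (Dom C f).
        Comp C g f = Idt C (Dom C f) \<and> Comp C f g = Idt C (Cod C f))"

text \<open>Left multiadjoint: for every object d of D a family (c_k, e_k : F c_k \<rightarrow> d),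
represented as a set of pairs, such that every e : F c \<rightarrow> d factors as
e = e_k \<circ> F f for a unique member k of the family and a unique f : c \<rightarrow> c_k.\<close>

definition left_multiadjoint ::
  "('a, 'b) cat \<Rightarrow> ('c, 'd) cat \<Rightarrow> ('a \<Rightarrow> 'c) \<Rightarrow> ('b \<Rightarrow> 'd) \<Rightarrow> bool" where
  "left_multiadjoint C D Fo Fm \<longleftrightarrow> is_functor C D Fo Fm \<and>
     (\<forall>d \<in> Obj D. \<exists>E :: ('a \<times> 'd) set.
        (\<forall>(c, ek) \<in> E. c \<in> Obj C \<and> ek \<in> hom D (Fo c) d) \<and>
        (\<forall>c \<in> Obj C. \<forall>e \<in> hom D (Fo c) d.
           \<exists>!(ck, ek, f). (ck, ek) \<in> E \<and> f \<in> hom C c ck \<and> e = Comp D ek (Fm f)))"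

definition composable_class :: "('o, 'm) cat \<Rightarrow> 'm set \<Rightarrow> bool" where
  "composable_class C M \<longleftrightarrow> M \<subseteq> Arr C \<and>
     (\<forall>f \<in> M. \<forall>g \<in> M. Cod C f = Dom C g \<longrightarrow> Comp C g f \<in> M) \<and>
     (\<forall>f. is_iso C f \<longrightarrow> f \<in> M)"

definition left_cancellable :: "('o, 'm) cat \<Rightarrow> 'm set \<Rightarrow> bool" where
  "left_cancellable C M \<longleftrightarrow>
     (\<forall>f \<in> Arr C. \<forall>g \<in> Arr C. Cod C f = Dom C g \<longrightarrow> Comp C g f \<in> M \<longrightarrow> f \<in> M)"

type_synonym 'm square = "'m \<times> 'm \<times> 'm \<times> 'm"

definition comm_square_in :: "('o, 'm) cat \<Rightarrow> 'm set \<Rightarrow> 'm square \<Rightarrow> bool" where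
  "comm_square_in C M s \<longleftrightarrow> (case s of (f1, f2, g1, g2) \<Rightarrow>
     f1 \<in> M \<and> f2 \<in> M \<and> g1 \<in> M \<and> g2 \<in> M \<and>
     f1 \<in> Arr C \<and> f2 \<in> Arr C \<and> g1 \<in> Arr C \<and> g2 \<in> Arr C \<and>
     Dom C f1 = Dom C f2 \<and> Cod C f1 = Dom C g1 \<and> Cod C f2 = Dom C g2 \<and>
     Cod C g1 = Cod C g2 \<and> Comp C g1 f1 = Comp C g2 f2)"

definition independence_rel :: "('o, 'm) cat \<Rightarrow> 'm set \<Rightarrow> 'm square set \<Rightarrow> bool" where
  "independence_rel C M I \<longleftrightarrow> (\<forall>s \<in> I. comm_square_in C M s)"

text \<open>Uniqueness for an independence relation on C_M: amalgamation in C_M.\<close>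

definition uniqueness :: "('o, 'm) cat \<Rightarrow> 'm set \<Rightarrow> 'm square set \<Rightarrow> bool" where
  "uniqueness C M I \<longleftrightarrow>
     (\<forall>f1 f2 g1 g2 g1' g2'. (f1, f2, g1, g2) \<in> I \<longrightarrow> (f1, f2, g1', g2') \<in> I \<longrightarrow>
        (\<exists>n h h'. n \<in> Obj C \<and> h \<in> M \<and> h' \<in> M \<and>
           h \<in> hom C (Cod C g1) n \<and> h' \<in> hom C (Cod C g1') n \<and>
           Comp C h g1 = Comp C h' g1' \<and> Comp C h g2 = Comp C h' g2'))"

definition preimage_class :: "('a, 'b) cat \<Rightarrow> ('b \<Rightarrow> 'd) \<Rightarrow> 'd set \<Rightarrow> 'b set" where
  "preimage_class C Fm M = {f \<in> Arr C. Fm f \<in> M}"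

definition map_square :: "('b \<Rightarrow> 'd) \<Rightarrow> 'b square \<Rightarrow> 'd square" where
  "map_square Fm s = (case s of (f1, f2, g1, g2) \<Rightarrow> (Fm f1, Fm f2, Fm g1, Fm g2))"

definition preimage_rel ::
  "('a, 'b) cat \<Rightarrow> ('b \<Rightarrow> 'd) \<Rightarrow> 'd set \<Rightarrow> 'd square set \<Rightarrow> 'b square set" where
  "preimage_rel C Fm M I =
     {s. comm_square_in C (preimage_class C Fm M) s \<and> map_square Fm s \<in> I}"

end

theory Submission
  imports Defs
begin

text \<open>Amalgamate the images of the two squares in \<open>D\<close> by \<open>h, h'\<close> into some \<open>n\<close>, and factor
\<open>h = e\<^sub>k F(u)\<close> and \<open>h' = e\<^sub>k\<^sub>' F(u')\<close> through the multiadjoint family at \<open>n\<close>.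
The arrow \<open>h F(g\<^sub>1) = h' F(g\<^sub>1')\<close> then has the two factorizations \<open>e\<^sub>k F(u g\<^sub>1)\<close> and
\<open>e\<^sub>k\<^sub>' F(u' g\<^sub>1')\<close>, so by uniqueness \<open>k = k'\<close> and \<open>u g\<^sub>1 = u' g\<^sub>1'\<close>; likewise for \<open>g\<^sub>2\<close>.
Thus \<open>u, u'\<close> amalgamate the squares in \<open>C\<close>, and \<open>F(u) \<in> M\<close> by left cancellation
from \<open>e\<^sub>k F(u) = h \<in> M\<close>.\<close>

lemma category_hom_objs:
  assumes "is_category C" and "f \<in> hom C x y"
  shows "x \<in> Obj C" and "y \<in> Obj C"
  using assms by (auto simp: is_category_def hom_def)

lemma category_comp_hom:
  assumes "is_category C" and "f \<in> hom C x y" and "g \<in> hom C y z"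
  shows "Comp C g f \<in> hom C x z"
  using assms by (auto simp: is_category_def hom_def)

lemma category_comp_assoc:
  assumes "is_category C" and "f \<in> hom C w x" and "g \<in> hom C x y" and "k \<in> hom C y z"
  shows "Comp C k (Comp C g f) = Comp C (Comp C k g) f"
proof -
  have "\<forall>f \<in> Arr C. \<forall>g \<in> Arr C. \<forall>h \<in> Arr C. Cod C f = Dom C g \<longrightarrow> Cod C g = Dom C h \<longrightarrow>
      Comp C h (Comp C g f) = Comp C (Comp C h g) f"
    using assms(1) by (simp add: is_category_def)
  then show ?thesis
    using assms(2-4) by (auto simp: hom_def)
qed

lemma functor_hom:
  assumes "is_functor C D Fo Fm" and "f \<in> hom C x y"
  shows "Fm f \<in> hom D (Fo x) (Fo y)"
  using assms by (auto simp: is_functor_def hom_def)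

lemma functor_comp:
  assumes "is_functor C D Fo Fm" and "f \<in> hom C x y" and "g \<in> hom C y z"
  shows "Fm (Comp C g f) = Comp D (Fm g) (Fm f)"
  using assms by (auto simp: is_functor_def hom_def)

definition multiadjoint_family ::
  "('a, 'b) cat \<Rightarrow> ('c, 'd) cat \<Rightarrow> ('a \<Rightarrow> 'c) \<Rightarrow> ('b \<Rightarrow> 'd) \<Rightarrow> 'c \<Rightarrow> ('a \<times> 'd) set \<Rightarrow> bool"
where
  "multiadjoint_family C D Fo Fm d E \<longleftrightarrow>
     (\<forall>(c, ek) \<in> E. c \<in> Obj C \<and> ek \<in> hom D (Fo c) d) \<and>
     (\<forall>c \<in> Obj C. \<forall>e \<in> hom D (Fo c) d.
        \<exists>!(ck, ek, f). (ck, ek) \<in> E \<and> f \<in> hom C c ck \<and> e = Comp D ek (Fm f))"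

lemma left_multiadjointE:
  assumes "left_multiadjoint C D Fo Fm" and "d \<in> Obj D"
  obtains E where "multiadjoint_family C D Fo Fm d E"
  using assms unfolding left_multiadjoint_def multiadjoint_family_def by blast

lemma left_multiadjoint_functor:
  "left_multiadjoint C D Fo Fm \<Longrightarrow> is_functor C D Fo Fm"
  by (simp add: left_multiadjoint_def)

lemma multiadjoint_family_member:
  assumes "multiadjoint_family C D Fo Fm d E" and "(c, ek) \<in> E"
  shows "c \<in> Obj C" and "ek \<in> hom D (Fo c) d"
  using assms by (auto simp: multiadjoint_family_def)

lemma multiadjoint_family_factor:
  assumes "multiadjoint_family C D Fo Fm d E" and "c \<in> Obj C" and "e \<in> hom D (Fo c) d"
  obtains ck ek f where "(ck, ek) \<in> E" and "f \<in> hom C c ck" and "e = Comp D ek (Fm f)"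
  using assms unfolding multiadjoint_family_def by fast

lemma multiadjoint_family_factor_unique:
  assumes D: "is_category D" and F: "is_functor C D Fo Fm"
    and E: "multiadjoint_family C D Fo Fm d E"
    and "c \<in> Obj C" and k: "(ck, ek) \<in> E" and k': "(ck', ek') \<in> E"
    and f: "f \<in> hom C c ck" and f': "f' \<in> hom C c ck'"
    and eq: "Comp D ek (Fm f) = Comp D ek' (Fm f')"
  shows "ck = ck' \<and> ek = ek' \<and> f = f'"
proof -
  let ?e = "Comp D ek (Fm f)"
  have "?e \<in> hom D (Fo c) d"
    using category_comp_hom[OF D functor_hom[OF F f] multiadjoint_family_member(2)[OF E k]] .
  with E \<open>c \<in> Obj C\<close>
  have "\<exists>!(ck, ek, f). (ck, ek) \<in> E \<and> f \<in> hom C c ck \<and> ?e = Comp D ek (Fm f)"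
    unfolding multiadjoint_family_def by blast
  then have "(ck, ek, f) = (ck', ek', f')"
    by (rule Uniq_D[OF conjunct2[OF iffD1[OF ex1_iff_ex_Uniq]]]) (use k k' f f' eq in auto)
  then show ?thesis by simp
qed

lemma multiadjoint_family_cancel:
  assumes C: "is_category C" and D: "is_category D" and F: "is_functor C D Fo Fm"
    and E: "multiadjoint_family C D Fo Fm d E"
    and k: "(ck, ek) \<in> E" and k': "(ck', ek') \<in> E"
    and u: "u \<in> hom C x ck" and u': "u' \<in> hom C x' ck'"
    and g: "g \<in> hom C c x" and g': "g' \<in> hom C c x'"
    and eq: "Comp D (Comp D ek (Fm u)) (Fm g) = Comp D (Comp D ek' (Fm u')) (Fm g')"
  shows "ck = ck' \<and> ek = ek' \<and> Comp C u g = Comp C u' g'"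
proof -
  have ek: "ek \<in> hom D (Fo ck) d" and ek': "ek' \<in> hom D (Fo ck') d"
    using multiadjoint_family_member(2)[OF E] k k' by auto
  have "Comp D ek (Fm (Comp C u g)) = Comp D (Comp D ek (Fm u)) (Fm g)"
    using category_comp_assoc[OF D functor_hom[OF F g] functor_hom[OF F u] ek]
    by (simp only: functor_comp[OF F g u])
  also have "\<dots> = Comp D (Comp D ek' (Fm u')) (Fm g')"
    by (fact eq)
  also have "\<dots> = Comp D ek' (Fm (Comp C u' g'))"
    using category_comp_assoc[OF D functor_hom[OF F g'] functor_hom[OF F u'] ek']
    by (simp only: functor_comp[OF F g' u'])
  finally show ?thesis
    by (rule multiadjoint_family_factor_unique[OF D F E category_hom_objs(1)[OF C g] k k'
        category_comp_hom[OF C g u] category_comp_hom[OF C g' u']])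
qed

lemma left_cancellable_preimage_class:
  assumes "is_functor C D Fo Fm" and "left_cancellable D M"
    and "v \<in> hom C y c" and "e \<in> hom D (Fo c) d" and "Comp D e (Fm v) \<in> M"
  shows "v \<in> preimage_class C Fm M"
  using assms functor_hom[OF assms(1,3)]
  by (auto simp: left_cancellable_def preimage_class_def hom_def)

lemma left_multiadjoint_lifts_amalgamation:
  assumes "is_category C" and "is_category D" and FE: "left_multiadjoint C D Fo Fm"
    and "left_cancellable D M"
    and g1: "g1 \<in> hom C a x" and g2: "g2 \<in> hom C b x"
    and g1': "g1' \<in> hom C a x'" and g2': "g2' \<in> hom C b x'"
    and "n \<in> Obj D" and h: "h \<in> hom D (Fo x) n" and h': "h' \<in> hom D (Fo x') n"
    and "h \<in> M" and "h' \<in> M"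
    and eq1: "Comp D h (Fm g1) = Comp D h' (Fm g1')"
    and eq2: "Comp D h (Fm g2) = Comp D h' (Fm g2')"
  shows "\<exists>m u u'. m \<in> Obj C \<and> u \<in> preimage_class C Fm M \<and> u' \<in> preimage_class C Fm M \<and>
           u \<in> hom C x m \<and> u' \<in> hom C x' m \<and>
           Comp C u g1 = Comp C u' g1' \<and> Comp C u g2 = Comp C u' g2'"
proof -
  have F: "is_functor C D Fo Fm" using FE by (rule left_multiadjoint_functor)
  obtain E where E: "multiadjoint_family C D Fo Fm n E"
    using FE \<open>n \<in> Obj D\<close> by (rule left_multiadjointE)
  obtain ck ek u where k: "(ck, ek) \<in> E" and u: "u \<in> hom C x ck" and h_eq: "h = Comp D ek (Fm u)"
    using multiadjoint_family_factor[OF E category_hom_objs(2)[OF \<open>is_category C\<close> g1] h] .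
  obtain ck' ek' u' where k': "(ck', ek') \<in> E" and u': "u' \<in> hom C x' ck'"
    and h'_eq: "h' = Comp D ek' (Fm u')"
    using multiadjoint_family_factor[OF E category_hom_objs(2)[OF \<open>is_category C\<close> g1'] h'] .
  have shared_factor: "ck = ck' \<and> ek = ek' \<and> Comp C u g1 = Comp C u' g1'"
    using multiadjoint_family_cancel[OF assms(1,2) F E k k' u u' g1 g1']
      eq1 h_eq h'_eq by simp
  moreover have "Comp C u g2 = Comp C u' g2'"
    using multiadjoint_family_cancel[OF assms(1,2) F E k k' u u' g2 g2']
      eq2 h_eq h'_eq by simp
  moreover have "u \<in> preimage_class C Fm M"
    using left_cancellable_preimage_class[OF F \<open>left_cancellable D M\<close> u
        multiadjoint_family_member(2)[OF E k]] \<open>h \<in> M\<close> h_eq by simp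
  moreover have "u' \<in> preimage_class C Fm M"
    using left_cancellable_preimage_class[OF F \<open>left_cancellable D M\<close> u'
        multiadjoint_family_member(2)[OF E k']] \<open>h' \<in> M\<close> h'_eq by simp
  ultimately show ?thesis
    using u u' category_hom_objs(2)[OF \<open>is_category C\<close> u] by blast
qed

theorem theorem4p13:
  fixes C :: "('a, 'b) cat" and D :: "('c, 'd) cat"
    and Fo :: "'a \<Rightarrow> 'c" and Fm :: "'b \<Rightarrow> 'd"
    and M :: "'d set" and I :: "'d square set"
  assumes "is_category C" and "is_category D"
    and "left_multiadjoint C D Fo Fm"
    and "composable_class D M" and "left_cancellable D M"
    and "independence_rel D M I" and "uniqueness D M I"
  shows "independence_rel C (preimage_class C Fm M) (preimage_rel C Fm M I) \<and>
         uniqueness C (preimage_class C Fm M) (preimage_rel C Fm M I)"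
proof
  show "independence_rel C (preimage_class C Fm M) (preimage_rel C Fm M I)"
    by (simp add: independence_rel_def preimage_rel_def)
  show "uniqueness C (preimage_class C Fm M) (preimage_rel C Fm M I)"
    unfolding uniqueness_def
  proof (intro allI impI)
    fix f1 f2 g1 g2 g1' g2'
    assume s: "(f1, f2, g1, g2) \<in> preimage_rel C Fm M I"
      and s': "(f1, f2, g1', g2') \<in> preimage_rel C Fm M I"
    let ?a = "Cod C f1" and ?b = "Cod C f2" and ?x = "Cod C g1" and ?x' = "Cod C g1'"
    have g: "g1 \<in> hom C ?a ?x" "g2 \<in> hom C ?b ?x" "g1' \<in> hom C ?a ?x'" "g2' \<in> hom C ?b ?x'"
      using s s' by (auto simp: preimage_rel_def comm_square_in_def hom_def)
    have "(Fm f1, Fm f2, Fm g1, Fm g2) \<in> I" "(Fm f1, Fm f2, Fm g1', Fm g2') \<in> I"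
      using s s' by (auto simp: preimage_rel_def map_square_def)
    then obtain n h h' where "n \<in> Obj D" "h \<in> M" "h' \<in> M"
      "h \<in> hom D (Cod D (Fm g1)) n" "h' \<in> hom D (Cod D (Fm g1')) n"
      "Comp D h (Fm g1) = Comp D h' (Fm g1')" "Comp D h (Fm g2) = Comp D h' (Fm g2')"
      using \<open>uniqueness D M I\<close> unfolding uniqueness_def by blast
    moreover have "Cod D (Fm g1) = Fo ?x" "Cod D (Fm g1') = Fo ?x'"
      using functor_hom[OF left_multiadjoint_functor[OF assms(3)]] g by (auto simp: hom_def)
    ultimately show "\<exists>n h h'. n \<in> Obj C \<and> h \<in> preimage_class C Fm M \<and>
        h' \<in> preimage_class C Fm M \<and> h \<in> hom C (Cod C g1) n \<and> h' \<in> hom C (Cod C g1') n \<and>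
        Comp C h g1 = Comp C h' g1' \<and> Comp C h g2 = Comp C h' g2'"
      using left_multiadjoint_lifts_amalgamation[OF assms(1,2,3,5) g] by simp
  qed
qed

end
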